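(* Let $n,k,j,i$ be integers with $n \geq k > 0$, $0 \le j < n$, and $i \geq 1$. Then $$f_{(n,k) \setminus (j),i}(q) = q^{i^2} \left( \begin{bmatrix} n-j \\ i \end{bmatrix}_q \begin{bmatrix} k \\ i \end{bmatrix}_q - \begin{bmatrix} n+1 \\ i \end{bmatrix}_q \begin{bmatrix} k-j-1 \\ i \end{bmatrix}_q \right).$$
   Context: For partitions $\mu\subseteq\lambda$, the skew shape $\lambda\setminus\mu$ is the set of boxes of the Ferrers diagram of $\lambda$ (row $r$ has $\lambda_r$ left-justified boxes, rows numbered top to bottom) not in that of $\mu$. Thus $(n,k)\setminus(j)$ has a top row occupying columns $j+1,\dots,n$ and a bottom row occupying columns $1,\dots,k$. A standard Young tableau of shape $\lambda\setminus\mu$ with $N$ boxes is a filling with $1,\dots,N$, each used once, increasing left to right along rows and top to bottom down columns. Such a tableau $\tau$ has a descent at $m$ ($1\le m\le N-1$) if $m+1$ lies in a strictly lower row than $m$; $\mathrm{des}(\tau)$ is the number of descents and $\mathrm{maj}(\tau)$ is the sum of the descents. $f_{\lambda\setminus\mu,i}(q)=\sum_{\tau} q^{\mathrm{maj}(\tau)}$, summed over standard Young tableaux $\tau$ of shape $\lambda\setminus\mu$ with $\mathrm{des}(\tau)=i$ (for $\mu=\emptyset$ write $f_{\lambda,i}$). The $q$-binomial coefficient is $\begin{bmatrix} M \\ N \end{bmatrix}_q = \frac{(q)_M}{(q)_N(q)_{M-N}}$ with $(q)_m=(1-q)\cdots(1-q^m)$ when $0\le N\le M$ are integers, and $\begin{bmatrix}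 M \\ N \end{bmatrix}_q =0$ otherwise. *)

theory Defs
  imports "HOL-Computational_Algebra.Polynomial"
begin

text \<open>Boxes are pairs (row, column), 0-indexed; rows are numbered top to bottom.
  Partitions are given as lists of (weakly decreasing) row lengths.\<close>

definition skew_shape :: "nat list \<Rightarrow> nat list \<Rightarrow> (nat \<times> nat) set" where
  "skew_shape lam mu =
     {(r, c). r < length lam \<and> c < lam ! r \<and> \<not> (r < length mu \<and> c < mu ! r)}"

definition SYT :: "(nat \<times> nat) set \<Rightarrow> ((nat \<times> nat) \<Rightarrow> nat) set" where
  "SYT B = {T. bij_betw T B {1..card B}
              \<and> (\<forall>x. x \<notin> B \<longrightarrow> T x = 0)
              \<and> (\<forall>r c c'. (r, c) \<in> B \<longrightarrow> (r, c') \<in> B \<longrightarrow> c < c' \<longrightarrow> T (r, c) < T (r, c'))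
              \<and> (\<forall>r r' c. (r, c) \<in> B \<longrightarrow> (r', c) \<in> B \<longrightarrow> r < r' \<longrightarrow> T (r, c) < T (r', c))}"

definition row_of :: "(nat \<times> nat) set \<Rightarrow> ((nat \<times> nat) \<Rightarrow> nat) \<Rightarrow> nat \<Rightarrow> nat" where
  "row_of B T m = fst (inv_into B T m)"

definition descents :: "(nat \<times> nat) set \<Rightarrow> ((nat \<times> nat) \<Rightarrow> nat) \<Rightarrow> nat set" where
  "descents B T = {m. 1 \<le> m \<and> m + 1 \<le> card B \<and> row_of B T m < row_of B T (m + 1)}"

definition des :: "(nat \<times> nat) set \<Rightarrow> ((nat \<times> nat) \<Rightarrow> nat) \<Rightarrow> nat" where
  "des B T = card (descents B T)"

definition maj :: "(nat \<times> nat) set \<Rightarrow> ((nat \<times> nat) \<Rightarrow> nat) \<Rightarrow> nat" where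
  "maj B T = \<Sum> (descents B T)"

definition f_skew :: "nat list \<Rightarrow> nat list \<Rightarrow> nat \<Rightarrow> int poly" where
  "f_skew lam mu i =
     (let B = skew_shape lam mu in
      \<Sum>T \<in> {T \<in> SYT B. des B T = i}. monom 1 (maj B T))"

definition qpoch :: "nat \<Rightarrow> int poly" where
  "qpoch m = (\<Prod>l = 1..m. 1 - monom 1 l)"

definition qbinom :: "int \<Rightarrow> int \<Rightarrow> int poly" where
  "qbinom M N =
     (if 0 \<le> N \<and> N \<le> M
      then qpoch (nat M) div (qpoch (nat N) * qpoch (nat (M - N)))
      else 0)"

end

theory Submission
  imports Defs
begin

text \<open>Removing the largest entry \<open>N\<close> of a standard tableau of shape \<open>(n,k)/(j)\<close> leaves a
  tableau of shape \<open>(n-1,k)/(j)\<close> or \<open>(n,k-1)/(j)\<close>, according to whether \<open>N\<close> ends the top or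
  the bottom row, and \<open>N\<close> contributes a descent at \<open>N-1\<close> exactly when it ends the bottom row
  and \<open>N-1\<close> ends the top row. This gives a recursion in \<open>n\<close> and \<open>k\<close> for the generating
  polynomials. The closed form satisfies the same recursion: the q-Pascal rule
  \<open>[a,i] - [a-1,i] = q^(a-i) [a-1,i-1]\<close>, applied in both factors of \<open>q^(i^2) [a,i] [b,i]\<close>, turns
  its mixed second difference into \<open>q^(a+b-1)\<close> times the same expression with \<open>a\<close>, \<open>b\<close>, \<open>i\<close>
  each lowered by one.\<close>

section \<open>Gaussian binomial coefficients\<close>

lemma qpoch_0 [simp]: "qpoch 0 = 1"
  unfolding qpoch_def by simp

lemma qpoch_Suc: "qpoch (Suc m) = qpoch m * (1 - monom 1 (Suc m))"
  unfolding qpoch_def by simp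

lemma qpoch_nonzero [simp]: "qpoch m \<noteq> 0"
proof (induction m)
  case (Suc m)
  have "coeff (1 - monom (1::int) (Suc m)) 0 = 1"
    by simp
  then have "1 - monom (1::int) (Suc m) \<noteq> 0"
    by (metis coeff_0 zero_neq_one)
  with Suc show ?case
    by (simp add: qpoch_Suc)
qed simp

fun qbinom_nat :: "nat \<Rightarrow> nat \<Rightarrow> int poly" where
  "qbinom_nat M 0 = 1"
| "qbinom_nat 0 (Suc N) = 0"
| "qbinom_nat (Suc M) (Suc N) = qbinom_nat M N + monom 1 (Suc N) * qbinom_nat M (Suc N)"

lemma qbinom_nat_eq_0: "M < N \<Longrightarrow> qbinom_nat M N = 0"
  by (induction M N rule: qbinom_nat.induct) auto

lemma qbinom_nat_self [simp]: "qbinom_nat M M = 1"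
  by (induction M) (auto simp: qbinom_nat_eq_0)

lemma qbinom_nat_mult_qpoch:
  "N \<le> M \<Longrightarrow> qbinom_nat M N * qpoch N * qpoch (M - N) = qpoch M"
proof (induction M N rule: qbinom_nat.induct)
  case (3 M N)
  show ?case
  proof (cases "N = M")
    case False
    define D where "D = M - Suc N"
    have M: "M = N + Suc D" and MN: "M - N = Suc D"
      using "3.prems" False unfolding D_def by auto
    have IH1: "qbinom_nat M N * qpoch N * (qpoch D * (1 - monom 1 (Suc D))) = qpoch M"
      using "3.IH"(1) "3.prems" by (simp add: MN qpoch_Suc)
    have IH2: "qbinom_nat M (Suc N) * (qpoch N * (1 - monom 1 (Suc N))) * qpoch D = qpoch M"
      using "3.IH"(2) "3.prems" False by (simp add: D_def qpoch_Suc)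
    have "qbinom_nat (Suc M) (Suc N) * qpoch (Suc N) * qpoch (Suc M - Suc N)
        = (qbinom_nat M N * qpoch N * (qpoch D * (1 - monom 1 (Suc D)))) * (1 - monom 1 (Suc N))
          + monom 1 (Suc N) * (1 - monom 1 (Suc D))
            * (qbinom_nat M (Suc N) * (qpoch N * (1 - monom 1 (Suc N))) * qpoch D)"
      by (simp add: MN qpoch_Suc algebra_simps)
    also have "\<dots> = qpoch M * (1 - monom 1 (Suc N)) + monom 1 (Suc N) * (1 - monom 1 (Suc D)) * qpoch M"
      by (simp only: IH1 IH2)
    also have "\<dots> = qpoch (Suc M)"
      by (simp add: M qpoch_Suc algebra_simps mult_monom)
    finally show ?thesis .
  qed simp
qed simp_all

lemma qbinom_nat_symmetric: "N \<le> M \<Longrightarrow> qbinom_nat M (M - N) = qbinom_nat M N"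
proof -
  assume "N \<le> M"
  then have "qbinom_nat M (M - N) * (qpoch N * qpoch (M - N)) = qbinom_nat M N * (qpoch N * qpoch (M - N))"
    using qbinom_nat_mult_qpoch[of N M] qbinom_nat_mult_qpoch[of "M - N" M] by (simp add: ac_simps)
  then show ?thesis
    by simp
qed

lemma qbinom_nat_Suc_Suc':
  "qbinom_nat (Suc M) (Suc N) = qbinom_nat M (Suc N) + monom 1 (M - N) * qbinom_nat M N"
proof (cases "N < M")
  case True
  define D where "D = M - Suc N"
  have MN: "M - N = Suc D"
    using True unfolding D_def by simp
  have "qbinom_nat (Suc M) (Suc N) = qbinom_nat (Suc M) (Suc D)"
    using qbinom_nat_symmetric[of "Suc N" "Suc M"] True MN by simp
  also have "\<dots> = qbinom_nat M D + monom 1 (Suc D) * qbinom_nat M (Suc D)"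
    by simp
  also have "\<dots> = qbinom_nat M (Suc N) + monom 1 (M - N) * qbinom_nat M N"
    using qbinom_nat_symmetric[of D M] qbinom_nat_symmetric[of N M] True MN
    by (simp add: D_def)
  finally show ?thesis .
qed (auto simp: qbinom_nat_eq_0 le_Suc_eq dest: leI)

lemma qbinom_of_nat: "qbinom (int M) (int N) = qbinom_nat M N"
proof (cases "N \<le> M")
  case True
  then have "qpoch M = qbinom_nat M N * (qpoch N * qpoch (M - N))"
    using qbinom_nat_mult_qpoch by (simp add: ac_simps)
  with True show ?thesis
    unfolding qbinom_def by (simp add: nat_diff_distrib)
qed (simp add: qbinom_def qbinom_nat_eq_0)

lemma qbinom_neg_left: "M < 0 \<Longrightarrow> qbinom M N = 0"
  unfolding qbinom_def by simp

lemma qbinom_0_right: "qbinom M 0 = (if 0 \<le> M then 1 else 0)"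
  using qbinom_of_nat[of "nat M" 0] by (cases "0 \<le> M") (simp_all add: qbinom_neg_left)

lemma qbinom_0_left: "qbinom 0 (int N) = (if N = 0 then 1 else 0)"
  using qbinom_of_nat[of 0 N] by (cases N) auto

lemma qbinom_diff_top:
  assumes "1 \<le> N"
  shows "qbinom M (int N) - qbinom (M - 1) (int N)
       = monom 1 (nat (M - int N)) * qbinom (M - 1) (int N - 1)"
proof (cases "1 \<le> M")
  case True
  define A where "A = nat (M - 1)"
  have A: "M = int (Suc A)"
    using True unfolding A_def by simp
  obtain I where I: "N = Suc I"
    using assms by (cases N) auto
  show ?thesis
    using qbinom_nat_Suc_Suc'[of A I] qbinom_of_nat[of "Suc A" "Suc I"] qbinom_of_nat[of A "Suc I"]
      qbinom_of_nat[of A I]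
    by (simp add: A I nat_diff_distrib')
next
  case False
  then show ?thesis
    using assms qbinom_0_left[of N] by (cases "M = 0") (simp_all add: qbinom_neg_left)
qed

section \<open>The closed form\<close>

definition qbinom_pair :: "int \<Rightarrow> int \<Rightarrow> nat \<Rightarrow> int poly" where
  "qbinom_pair x y i = monom 1 (i ^ 2) * qbinom x (int i) * qbinom y (int i)"

lemma qbinom_pair_commute: "qbinom_pair x y i = qbinom_pair y x i"
  unfolding qbinom_pair_def by (simp add: ac_simps)

lemma qbinom_pair_0: "qbinom_pair x y 0 = (if 0 \<le> x \<and> 0 \<le> y then 1 else 0)"
  unfolding qbinom_pair_def by (simp add: qbinom_0_right)

lemma qbinom_pair_neg: "x < 0 \<Longrightarrow> qbinom_pair x y i = 0"
  unfolding qbinom_pair_def by (simp add: qbinom_neg_left)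

lemma qbinom_pair_mixed_diff:
  assumes "1 \<le> i"
  shows "qbinom_pair a b i - qbinom_pair (a - 1) b i - qbinom_pair a (b - 1) i + qbinom_pair (a - 1) (b - 1) i
       = monom 1 (nat (a + b - 1)) * qbinom_pair (a - 1) (b - 1) (i - 1)"
proof -
  have i: "int (i - 1) = int i - 1"
    using assms by simp
  have "qbinom_pair a b i - qbinom_pair (a - 1) b i - qbinom_pair a (b - 1) i + qbinom_pair (a - 1) (b - 1) i
      = monom 1 (i^2) * (qbinom a (int i) - qbinom (a - 1) (int i)) * (qbinom b (int i) - qbinom (b - 1) (int i))"
    unfolding qbinom_pair_def by (simp add: algebra_simps)
  also have "\<dots> = monom 1 (i^2) * monom 1 (nat (a - int i)) * monom 1 (nat (b - int i))
                 * (qbinom (a - 1) (int (i - 1)) * qbinom (b - 1) (int (i - 1)))"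
    unfolding qbinom_diff_top[OF assms] i by (simp add: ac_simps)
  also have "\<dots> = monom 1 (nat (a + b - 1)) * qbinom_pair (a - 1) (b - 1) (i - 1)"
  proof (cases "int i \<le> a \<and> int i \<le> b")
    case True
    have "int (i^2 + nat (a - int i) + nat (b - int i)) = int i ^ 2 + (a - int i) + (b - int i)"
      using True by simp
    also have "\<dots> = (a + b - 1) + (int i - 1)^2"
      by (simp add: power2_eq_square algebra_simps)
    also have "\<dots> = int (nat (a + b - 1) + (i - 1)^2)"
      using True assms i by simp
    finally have "i^2 + nat (a - int i) + nat (b - int i) = nat (a + b - 1) + (i - 1)^2"
      by (simp only: of_nat_eq_iff)
    then show ?thesis
      unfolding qbinom_pair_def by (simp add: mult_monom ac_simps)
  next
    case False
    then have "qbinom (a - 1) (int (i - 1)) = 0 \<or> qbinom (b - 1) (int (i - 1)) = 0"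
      using i by (auto simp: qbinom_def)
    then show ?thesis
      unfolding qbinom_pair_def by auto
  qed
  finally show ?thesis .
qed

text \<open>\<open>n\<close> and \<open>k\<close> are integers so that the recursion may step below \<open>n = j\<close>, where the formula vanishes.\<close>
definition two_row_formula :: "nat \<Rightarrow> int \<Rightarrow> int \<Rightarrow> nat \<Rightarrow> int poly" where
  "two_row_formula j n k i = qbinom_pair (n - int j) k i - qbinom_pair (n + 1) (k - int j - 1) i"

lemma two_row_formula_rec:
  assumes "int j \<le> n" and "0 < k"
  shows "two_row_formula j n k i
       = two_row_formula j (n - 1) k i + two_row_formula j n (k - 1) i - two_row_formula j (n - 1) (k - 1) i
         + (if i = 0 then 0 else monom 1 (nat (n - int j + k - 1)) * two_row_formula j (n - 1) (k - 1) (i - 1))"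
proof (cases "i = 0")
  case True
  with assms show ?thesis
    unfolding two_row_formula_def by (simp add: qbinom_pair_0)
next
  case False
  then have "1 \<le> i"
    by simp
  from qbinom_pair_mixed_diff[OF this, of "n - int j" k] qbinom_pair_mixed_diff[OF this, of "n + 1" "k - int j - 1"]
  show ?thesis
    unfolding two_row_formula_def using False by (simp add: algebra_simps)
qed

lemma two_row_formula_k0: "int j \<le> n \<Longrightarrow> two_row_formula j n 0 i = (if i = 0 then 1 else 0)"
  unfolding two_row_formula_def qbinom_pair_def by (simp add: qbinom_neg_left qbinom_0_right qbinom_0_left)

lemma two_row_formula_vanish:
  assumes "j \<le> n" and "k \<le> n" and "\<not> (j < n \<and> k < n)"
  shows "two_row_formula j (int n - 1) (int k) i = 0"
proof (cases "j = n")
  case True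
  with assms show ?thesis
    unfolding two_row_formula_def by (simp add: qbinom_pair_neg qbinom_pair_commute[of "int n"])
next
  case False
  with assms have "k = n"
    by simp
  then show ?thesis
    unfolding two_row_formula_def using qbinom_pair_commute by (simp add: algebra_simps)
qed

section \<open>Removing the largest entry of a standard tableau\<close>

lemma finite_SYT: "finite B \<Longrightarrow> finite (SYT B)"
proof -
  assume "finite B"
  then have "finite {T. \<forall>x. (x \<in> B \<longrightarrow> T x \<in> {1..card B}) \<and> (x \<notin> B \<longrightarrow> T x = (0::nat))}"
    by (intro finite_set_of_finite_funs) auto
  moreover have "SYT B \<subseteq> {T. \<forall>x. (x \<in> B \<longrightarrow> T x \<in> {1..card B}) \<and> (x \<notin> B \<longrightarrow> T x = 0)}"
    unfolding SYT_def bij_betw_def by auto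
  ultimately show ?thesis
    by (rule finite_subset[rotated])
qed

lemma SYT_bij_betw: "T \<in> SYT B \<Longrightarrow> bij_betw T B {1..card B}"
  unfolding SYT_def by blast

lemma SYT_outside: "T \<in> SYT B \<Longrightarrow> x \<notin> B \<Longrightarrow> T x = 0"
  unfolding SYT_def by blast

lemma SYT_row_less: "T \<in> SYT B \<Longrightarrow> (r, c) \<in> B \<Longrightarrow> (r, c') \<in> B \<Longrightarrow> c < c' \<Longrightarrow> T (r, c) < T (r, c')"
  unfolding SYT_def by blast

lemma SYT_col_less: "T \<in> SYT B \<Longrightarrow> (r, c) \<in> B \<Longrightarrow> (r', c) \<in> B \<Longrightarrow> r < r' \<Longrightarrow> T (r, c) < T (r', c)"
  unfolding SYT_def by blast

lemma SYT_inj_on: "T \<in> SYT B \<Longrightarrow> inj_on T B"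
  unfolding SYT_def bij_betw_def by blast

lemma SYT_range: "T \<in> SYT B \<Longrightarrow> x \<in> B \<Longrightarrow> T x \<in> {1..card B}"
  unfolding SYT_def bij_betw_def by blast

lemma row_of_SYT: "T \<in> SYT B \<Longrightarrow> x \<in> B \<Longrightarrow> row_of B T (T x) = fst x"
  unfolding row_of_def by (simp add: SYT_inj_on)

definition maximal_box :: "(nat \<times> nat) set \<Rightarrow> nat \<times> nat \<Rightarrow> bool" where
  "maximal_box B b \<longleftrightarrow> (\<forall>(r, c) \<in> B. \<not> (r = fst b \<and> snd b < c) \<and> \<not> (c = snd b \<and> fst b < r))"

lemma SYT_max_entry_maximal_box:
  assumes T: "T \<in> SYT B" and "x \<in> B" and "T x = card B"
  shows "maximal_box B x"
proof -
  have le: "T y \<le> T x" if "y \<in> B" for y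
    using SYT_range[OF T that] assms by simp
  obtain r0 c0 where x: "x = (r0, c0)"
    by fastforce
  show ?thesis
    unfolding maximal_box_def x using assms(2) le SYT_row_less[OF T] SYT_col_less[OF T]
    by (fastforce simp: x not_less[symmetric])
qed

lemma SYT_insert_maximal_box:
  assumes B: "finite B" "b \<notin> B" and b: "maximal_box B b" and T: "T \<in> SYT B"
  shows "T(b := Suc (card B)) \<in> SYT (insert b B)"
proof -
  let ?T = "T(b := Suc (card B))"
  have "bij_betw ?T B {1..card B}"
    by (rule bij_betw_cong[THEN iffD1, OF _ SYT_bij_betw[OF T]]) (use B in auto)
  then have "bij_betw ?T (B \<union> {b}) ({1..card B} \<union> {?T b})"
    by (intro notIn_Un_bij_betw[OF B(2)]) simp_all
  moreover have "{1..card B} \<union> {?T b} = {1..card (insert b B)}"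
    using B by auto
  ultimately have bij: "bij_betw ?T (insert b B) {1..card (insert b B)}"
    by simp
  have le: "T x < Suc (card B)" if "x \<in> B" for x
    using SYT_range[OF T that] by simp
  have less: "?T x < ?T y"
    if "x \<in> insert b B" "y \<in> insert b B" "x \<noteq> y"
      and "x \<in> B \<Longrightarrow> y \<in> B \<Longrightarrow> T x < T y" and "y \<in> B \<Longrightarrow> x \<noteq> b" for x y
    using that le B(2) by (cases "y = b") auto
  have "?T (r, c) < ?T (r, c')"
    if "(r, c) \<in> insert b B" "(r, c') \<in> insert b B" "c < c'" for r c c'
    using that b SYT_row_less[OF T] by (intro less) (auto simp: maximal_box_def)
  moreover have "?T (r, c) < ?T (r', c)"
    if "(r, c) \<in> insert b B" "(r', c) \<in> insert b B" "r < r'" for r r' c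
    using that b SYT_col_less[OF T] by (intro less) (auto simp: maximal_box_def)
  moreover have "?T x = 0" if "x \<notin> insert b B" for x
    using that SYT_outside[OF T] by simp
  ultimately show ?thesis
    using bij unfolding SYT_def by blast
qed

lemma SYT_remove_max_entry:
  assumes B: "finite B" "b \<in> B" and T: "T \<in> SYT B" "T b = card B"
  shows "T(b := 0) \<in> SYT (B - {b})"
proof -
  have "bij_betw T (B - {b}) ({1..card B} - {card B})"
    using SYT_bij_betw[OF T(1)] B T(2) by (intro bij_betw_DiffI) (auto simp: Suc_le_eq card_gt_0_iff)
  moreover have "{1..card B} - {card B} = {1..card (B - {b})}"
    using B by auto
  ultimately have "bij_betw T (B - {b}) {1..card (B - {b})}"
    by simp
  then have "bij_betw (T(b := 0)) (B - {b}) {1..card (B - {b})}"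
    by (rule bij_betw_cong[THEN iffD1, rotated]) simp
  then show ?thesis
    using SYT_outside[OF T(1)] SYT_row_less[OF T(1)] SYT_col_less[OF T(1)]
    unfolding SYT_def by auto
qed

lemma descents_insert_maximal_box:
  assumes B: "finite B" "b \<notin> B" and b: "maximal_box B b" and T: "T \<in> SYT B"
  shows "descents (insert b B) (T(b := Suc (card B)))
       = descents B T \<union> (if \<exists>x\<in>B. T x = card B \<and> fst x < fst b then {card B} else {})"
proof -
  let ?T = "T(b := Suc (card B))"
  have T': "?T \<in> SYT (insert b B)"
    by (rule SYT_insert_maximal_box[OF assms])
  have card: "card (insert b B) = Suc (card B)"
    using B by simp
  have entry: "\<exists>x\<in>B. T x = m" if "m \<in> {1..card B}" for m
    using that SYT_bij_betw[OF T] unfolding bij_betw_def by (metis imageE)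
  have row: "row_of (insert b B) ?T m = row_of B T m" if m: "m \<in> {1..card B}" for m
  proof -
    obtain x where x: "x \<in> B" "T x = m"
      using entry[OF m] by blast
    with B(2) have "?T x = m"
      by auto
    with x show ?thesis
      using row_of_SYT[OF T' insertI2[OF x(1)]] row_of_SYT[OF T x(1)] by simp
  qed
  have top: "row_of (insert b B) ?T (Suc (card B)) = fst b"
    using row_of_SYT[OF T' insertI1] by simp
  have last: "(\<exists>x\<in>B. T x = card B \<and> fst x < fst b) \<longleftrightarrow> 1 \<le> card B \<and> row_of B T (card B) < fst b"
    using entry[of "card B"] row_of_SYT[OF T] SYT_range[OF T] by fastforce
  show ?thesis
  proof (rule set_eqI)
    fix m
    consider "m + 1 \<le> card B" | "m = card B" | "card B < m"
      by linarith
    then show "m \<in> descents (insert b B) ?T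
      \<longleftrightarrow> m \<in> descents B T \<union> (if \<exists>x\<in>B. T x = card B \<and> fst x < fst b then {card B} else {})"
    proof cases
      case 1
      then show ?thesis
        unfolding descents_def card using row[of m] row[of "m + 1"] by auto
    next
      case 2
      then show ?thesis
        unfolding descents_def card last using row[of m] top by auto
    qed (auto simp: descents_def card)
  qed
qed

definition max_at :: "(nat \<times> nat) set \<Rightarrow> nat \<times> nat \<Rightarrow> ((nat \<times> nat) \<Rightarrow> nat) \<Rightarrow> bool" where
  "max_at B b T \<longleftrightarrow> b \<in> B \<and> T b = card B"

lemma bij_betw_SYT_insert_maximal_box:
  assumes B: "finite B" "b \<notin> B" and b: "maximal_box B b"
  shows "bij_betw (\<lambda>T. T(b := Suc (card B))) (SYT B) {T \<in> SYT (insert b B). max_at (insert b B) b T}"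
proof (rule bij_betw_byWitness[where f' = "\<lambda>T. T(b := 0)"])
  show "\<forall>T \<in> SYT B. (T(b := Suc (card B)))(b := 0) = T"
    using SYT_outside B(2) by fastforce
  show "\<forall>T \<in> {T \<in> SYT (insert b B). max_at (insert b B) b T}. (T(b := 0))(b := Suc (card B)) = T"
    using B by (auto simp: max_at_def)
  show "(\<lambda>T. T(b := Suc (card B))) ` SYT B \<subseteq> {T \<in> SYT (insert b B). max_at (insert b B) b T}"
    using SYT_insert_maximal_box[OF B b] B by (auto simp: max_at_def)
  show "(\<lambda>T. T(b := 0)) ` {T \<in> SYT (insert b B). max_at (insert b B) b T} \<subseteq> SYT B"
    using SYT_remove_max_entry[of "insert b B" b] B by (auto simp: max_at_def)
qed

definition maj_poly :: "(nat \<times> nat) set \<Rightarrow> (((nat \<times> nat) \<Rightarrow> nat) \<Rightarrow> bool) \<Rightarrow> nat \<Rightarrow> int poly" where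
  "maj_poly B P i = (\<Sum>T | T \<in> SYT B \<and> des B T = i \<and> P T. monom 1 (maj B T))"

lemma f_skew_eq_maj_poly: "f_skew lam mu i = maj_poly (skew_shape lam mu) (\<lambda>_. True) i"
  unfolding f_skew_def maj_poly_def Let_def by simp

lemma maj_poly_cong:
  "(\<And>T. T \<in> SYT B \<Longrightarrow> P T \<longleftrightarrow> Q T) \<Longrightarrow> maj_poly B P i = maj_poly B Q i"
  unfolding maj_poly_def by (rule sum.cong) auto

lemma maj_poly_False [simp]: "maj_poly B (\<lambda>_. False) i = 0"
  unfolding maj_poly_def by simp

lemma maj_poly_max_at_notin: "b \<notin> B \<Longrightarrow> maj_poly B (max_at B b) i = 0"
  unfolding max_at_def by (simp cong: maj_poly_cong)

lemma maj_poly_split: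
  assumes "finite B"
  shows "maj_poly B P i = maj_poly B (\<lambda>T. P T \<and> Q T) i + maj_poly B (\<lambda>T. P T \<and> \<not> Q T) i"
  unfolding maj_poly_def
  by (subst sum.union_disjoint[symmetric]) (auto intro: sum.cong finite_subset[OF _ finite_SYT[OF assms]])

text \<open>\<open>P T\<close> holds exactly when putting the new largest entry into \<open>b\<close> creates a descent at \<open>card B\<close>.\<close>
lemma maj_poly_max_at_insert:
  assumes B: "finite B" "b \<notin> B" and b: "maximal_box B b"
    and P: "\<And>T. T \<in> SYT B \<Longrightarrow> P T \<longleftrightarrow> (\<exists>x\<in>B. T x = card B \<and> fst x < fst b)"
  shows "maj_poly (insert b B) (max_at (insert b B) b) i
       = maj_poly B (\<lambda>T. \<not> P T) i + (if i = 0 then 0 else monom 1 (card B) * maj_poly B P (i - 1))"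
proof -
  let ?ins = "\<lambda>T. T(b := Suc (card B))"
  have last_not_descent: "card B \<notin> descents B T" for T
    by (simp add: descents_def)
  have finite_descents: "finite (descents B T)" for T
    by (rule finite_subset[of _ "{..card B}"]) (auto simp: descents_def)
  have "descents (insert b B) (?ins T) = descents B T \<union> (if P T then {card B} else {})"
    if "T \<in> SYT B" for T
    using descents_insert_maximal_box[OF B b that] P[OF that] by simp
  then have des: "des (insert b B) (?ins T) = des B T + (if P T then 1 else 0)"
    and maj: "maj (insert b B) (?ins T) = maj B T + (if P T then card B else 0)"
    if "T \<in> SYT B" for T
    using last_not_descent[of T] finite_descents[of T] that by (simp_all add: des_def maj_def)
  have "maj_poly (insert b B) (max_at (insert b B) b) i
      = (\<Sum>T \<in> {T \<in> {T \<in> SYT (insert b B). max_at (insert b B) b T}. des (insert b B) T = i}.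
           monom 1 (maj (insert b B) T))"
    unfolding maj_poly_def by (rule sum.cong) auto
  also have "\<dots> = (\<Sum>T \<in> {T \<in> SYT B. des (insert b B) (?ins T) = i}. monom 1 (maj (insert b B) (?ins T)))"
    by (rule sum.reindex_bij_betw[symmetric], rule bij_betw_Collect[OF bij_betw_SYT_insert_maximal_box[OF B b]])
      simp
  also have "{T \<in> SYT B. des (insert b B) (?ins T) = i}
      = {T. T \<in> SYT B \<and> des B T = i \<and> \<not> P T} \<union> {T. T \<in> SYT B \<and> des B T + 1 = i \<and> P T}"
    using des by auto
  also have "(\<Sum>T \<in> \<dots>. monom 1 (maj (insert b B) (?ins T)))
      = maj_poly B (\<lambda>T. \<not> P T) i
        + (\<Sum>T | T \<in> SYT B \<and> des B T + 1 = i \<and> P T. monom 1 (card B) * monom 1 (maj B T))"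
    unfolding maj_poly_def
    by (subst sum.union_disjoint)
      (auto intro!: sum.cong finite_subset[OF _ finite_SYT[OF B(1)]] simp: maj mult_monom add.commute)
  also have "(\<Sum>T | T \<in> SYT B \<and> des B T + 1 = i \<and> P T. monom 1 (card B) * monom 1 (maj B T))
      = (if i = 0 then 0 else monom 1 (card B) * maj_poly B P (i - 1))"
    unfolding maj_poly_def sum_distrib_left by (auto intro: sum.cong)
  finally show ?thesis .
qed

section \<open>Two-row skew shapes\<close>

lemma mem_two_row_skew_shape:
  "(r, c) \<in> skew_shape [n, k] [j] \<longleftrightarrow> (r = 0 \<and> j \<le> c \<and> c < n) \<or> (r = 1 \<and> c < k)"
  unfolding skew_shape_def by (cases r) (auto simp: nth_Cons split: nat.splits)

lemma finite_two_row_skew_shape: "finite (skew_shape [n, k] [j])"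
  by (rule finite_subset[of _ "{..1} \<times> {..<max n k}"]) (auto simp: mem_two_row_skew_shape)

lemma card_two_row_skew_shape: "card (skew_shape [n, k] [j]) = (n - j) + k"
proof -
  have "skew_shape [n, k] [j] = Pair 0 ` {j..<n} \<union> Pair 1 ` {..<k}"
    by (auto simp: mem_two_row_skew_shape)
  moreover have "card (Pair (0::nat) ` {j..<n} \<union> Pair (1::nat) ` {..<k}) = (n - j) + k"
    by (subst card_Un_disjoint) (auto simp: card_image inj_on_def)
  ultimately show ?thesis
    by simp
qed

lemma two_row_skew_shape_insert_top:
  assumes "j < n"
  shows "skew_shape [n, k] [j] = insert (0, n - 1) (skew_shape [n - 1, k] [j])"
    and "(0, n - 1) \<notin> skew_shape [n - 1, k] [j]"
    and "k < n \<Longrightarrow> maximal_box (skew_shape [n - 1, k] [j]) (0, n - 1)"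
  using assms by (auto simp: mem_two_row_skew_shape maximal_box_def)

lemma two_row_skew_shape_insert_bottom:
  assumes "0 < k"
  shows "skew_shape [n, k] [j] = insert (1, k - 1) (skew_shape [n, k - 1] [j])"
    and "(1, k - 1) \<notin> skew_shape [n, k - 1] [j]"
    and "maximal_box (skew_shape [n, k - 1] [j]) (1, k - 1)"
  using assms by (auto simp: mem_two_row_skew_shape maximal_box_def)

lemma two_row_max_entry:
  assumes T: "T \<in> SYT (skew_shape [n, k] [j])"
    and x: "x \<in> skew_shape [n, k] [j]" "T x = card (skew_shape [n, k] [j])"
  shows "x = (0, n - 1) \<or> x = (1, k - 1)"
proof -
  have "maximal_box (skew_shape [n, k] [j]) x"
    by (rule SYT_max_entry_maximal_box[OF T x])
  then have "(fst x, Suc (snd x)) \<notin> skew_shape [n, k] [j]"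
    unfolding maximal_box_def by auto
  with x(1) show ?thesis
    by (cases x) (auto simp: mem_two_row_skew_shape)
qed

lemma f_skew_two_row_split:
  assumes "j < n \<or> 0 < k"
  shows "f_skew [n, k] [j] i
       = maj_poly (skew_shape [n, k] [j]) (max_at (skew_shape [n, k] [j]) (0, n - 1)) i
         + maj_poly (skew_shape [n, k] [j]) (max_at (skew_shape [n, k] [j]) (1, k - 1)) i"
proof -
  let ?S = "skew_shape [n, k] [j]"
  have "\<not> max_at ?S (0, n - 1) T \<longleftrightarrow> max_at ?S (1, k - 1) T" if T: "T \<in> SYT ?S" for T
  proof -
    have "card ?S \<in> T ` ?S"
      using assms SYT_bij_betw[OF T] by (auto simp: bij_betw_def card_two_row_skew_shape)
    then obtain x where "x \<in> ?S" "T x = card ?S"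
      by (metis imageE)
    moreover have "(0::nat, n - 1) \<noteq> (1, k - 1)"
      by simp
    ultimately show ?thesis
      using two_row_max_entry[OF T] inj_onD[OF SYT_inj_on[OF T]] unfolding max_at_def by metis
  qed
  then show ?thesis
    unfolding f_skew_eq_maj_poly
    using maj_poly_split[OF finite_two_row_skew_shape, where P = "\<lambda>_. True" and Q = "max_at ?S (0, n - 1)"]
    by (simp cong: maj_poly_cong)
qed

lemma maj_poly_two_row_max_at_top:
  assumes "j \<le> n" and "k \<le> n"
  shows "maj_poly (skew_shape [n, k] [j]) (max_at (skew_shape [n, k] [j]) (0, n - 1)) i
       = (if j < n \<and> k < n then f_skew [n - 1, k] [j] i else 0)"
proof (cases "j < n \<and> k < n")
  case True
  let ?B = "skew_shape [n - 1, k] [j]"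
  have "maj_poly (insert (0, n - 1) ?B) (max_at (insert (0, n - 1) ?B) (0, n - 1)) i
      = maj_poly ?B (\<lambda>T. \<not> False) i
        + (if i = 0 then 0 else monom 1 (card ?B) * maj_poly ?B (\<lambda>_. False) (i - 1))"
    using True by (intro maj_poly_max_at_insert finite_two_row_skew_shape two_row_skew_shape_insert_top) auto
  moreover have "skew_shape [n, k] [j] = insert (0, n - 1) ?B"
    by (rule two_row_skew_shape_insert_top(1)) (use True in simp)
  ultimately show ?thesis
    using True by (simp add: f_skew_eq_maj_poly)
next
  case False
  let ?S = "skew_shape [n, k] [j]"
  have "\<not> max_at ?S (0, n - 1) T" if T: "T \<in> SYT ?S" for T
  proof
    assume "max_at ?S (0, n - 1) T"
    then have "j < n" "maximal_box ?S (0, n - 1)"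
      using SYT_max_entry_maximal_box[OF T] unfolding max_at_def
      by (auto simp: mem_two_row_skew_shape)
    moreover from this False assms have "(1, n - 1) \<in> ?S"
      by (auto simp: mem_two_row_skew_shape)
    ultimately show False
      unfolding maximal_box_def by fastforce
  qed
  then have "maj_poly ?S (max_at ?S (0, n - 1)) i = maj_poly ?S (\<lambda>_. False) i"
    by (intro maj_poly_cong) simp
  with False show ?thesis
    by auto
qed

lemma maj_poly_two_row_max_at_bottom:
  fixes n k j :: nat
  assumes "0 < k"
  defines "S' \<equiv> skew_shape [n, k - 1] [j]"
  shows "maj_poly (skew_shape [n, k] [j]) (max_at (skew_shape [n, k] [j]) (1, k - 1)) i
       = f_skew [n, k - 1] [j] i - maj_poly S' (max_at S' (0, n - 1)) i
         + (if i = 0 then 0 else monom 1 (n - j + (k - 1)) * maj_poly S' (max_at S' (0, n - 1)) (i - 1))"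
proof -
  have "max_at S' (0, n - 1) T \<longleftrightarrow> (\<exists>x\<in>S'. T x = card S' \<and> fst x < fst (1::nat, k - 1))"
    if T: "T \<in> SYT S'" for T
  proof
    assume "\<exists>x\<in>S'. T x = card S' \<and> fst x < fst (1::nat, k - 1)"
    then obtain x where "x \<in> S'" "T x = card S'" "fst x = 0"
      by auto
    with two_row_max_entry[OF T[unfolded S'_def]] show "max_at S' (0, n - 1) T"
      unfolding max_at_def S'_def by fastforce
  qed (auto simp: max_at_def)
  from maj_poly_max_at_insert[OF finite_two_row_skew_shape two_row_skew_shape_insert_bottom(2,3)[OF assms(1)]
      this[unfolded S'_def]]
  show ?thesis
    using maj_poly_split[OF finite_two_row_skew_shape, where P = "\<lambda>_. True" and Q = "max_at S' (0, n - 1)"]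
    unfolding S'_def two_row_skew_shape_insert_bottom(1)[OF assms(1), symmetric]
    by (simp add: f_skew_eq_maj_poly card_two_row_skew_shape)
qed

lemma f_skew_empty_two_row: "f_skew [j, 0] [j] i = (if i = 0 then 1 else 0)"
proof -
  have "skew_shape [j, 0] [j] = {}"
    by (auto simp: mem_two_row_skew_shape)
  moreover have "SYT {} = {\<lambda>_. 0}"
    unfolding SYT_def by (auto simp: bij_betw_def)
  ultimately show ?thesis
    by (simp add: f_skew_def des_def maj_def descents_def)
qed

lemma f_skew_two_row_eq_formula:
  "j \<le> n \<Longrightarrow> k \<le> n \<Longrightarrow> f_skew [n, k] [j] i = two_row_formula j (int n) (int k) i"
proof (induction "n + k" arbitrary: n k i rule: less_induct)
  case less
  have top: "maj_poly (skew_shape [n, k'] [j]) (max_at (skew_shape [n, k'] [j]) (0, n - 1)) i'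
      = two_row_formula j (int n - 1) (int k') i'" if "k' \<le> k" for k' i'
  proof (cases "j < n \<and> k' < n")
    case True
    with that less.prems have "f_skew [n - 1, k'] [j] i' = two_row_formula j (int (n - 1)) (int k') i'"
      by (intro less.hyps) auto
    with True show ?thesis
      using maj_poly_two_row_max_at_top[of j n k' i'] by simp
  next
    case False
    with that less.prems show ?thesis
      using maj_poly_two_row_max_at_top[of j n k' i'] by (auto simp: two_row_formula_vanish)
  qed
  consider "n = j" "k = 0" | "j < n" "k = 0" | "0 < k"
    using less.prems by linarith
  then show ?case
  proof cases
    case 1
    then show ?thesis
      by (simp add: f_skew_empty_two_row two_row_formula_k0)
  next
    case 2
    then have "maj_poly (skew_shape [n, k] [j]) (max_at (skew_shape [n, k] [j]) (1, k - 1)) i = 0"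
      by (simp add: maj_poly_max_at_notin mem_two_row_skew_shape)
    with 2 top[of 0 i] show ?thesis
      using f_skew_two_row_split[of j n k i] two_row_formula_k0[of j "int n" i] two_row_formula_k0[of j "int n - 1" i]
      by simp
  next
    case 3
    with less.prems have "f_skew [n, k - 1] [j] i = two_row_formula j (int n) (int k - 1) i"
      using less.hyps[of n "k - 1" i] by simp
    moreover have "nat (int n - int j + int k - 1) = n - j + (k - 1)"
      using less.prems 3 by simp
    ultimately show ?thesis
      using f_skew_two_row_split[of j n k i] maj_poly_two_row_max_at_bottom[OF 3, of n j i]
        top[of k i] top[of "k - 1" i] top[of "k - 1" "i - 1"] two_row_formula_rec[of j "int n" "int k" i]
        less.prems 3
      by simp
  qed
qed

theorem mainTheorem2:
  fixes n k j i :: nat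
  assumes "k \<le> n" and "0 < k" and "j < n" and "1 \<le> i"
  shows "f_skew [n, k] [j] i =
     monom 1 (i ^ 2) *
       (qbinom (int n - int j) (int i) * qbinom (int k) (int i)
        - qbinom (int n + 1) (int i) * qbinom (int k - int j - 1) (int i))"
proof -
  have "f_skew [n, k] [j] i = two_row_formula j (int n) (int k) i"
    using assms by (intro f_skew_two_row_eq_formula) simp_all
  then show ?thesis
    unfolding two_row_formula_def qbinom_pair_def by (simp add: algebra_simps)
qed

end
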